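(* Let $T=(\{T_g\}_{g\in G},\{\gamma_{g,h}\}_{g,h\in G},u)$ be an action of a group $G$ on a semigroupal category $\mathcal{C}$, let $\mathcal{I}$ be an ideal of $\mathcal{C}$, and for each $g\in G$ put $\mathcal{C}_g=\mathcal{I}\cap\overline{T_g(\mathcal{I})}$. Then $\overline{T_g(\mathcal{C}_{g^{-1}})}=\mathcal{C}_g$ for all $g\in G$.
   Context: A semigroupal category is a (strict) category with a tensor product functor and associator satisfying the pentagon axiom. An action of a group $G$ (unit $e$) on $\mathcal{C}$ consists of semigroupal auto-equivalences $T_g$ of $\mathcal{C}$, natural isomorphisms of semigroupal functors $\gamma_{g,h}\colon T_gT_h\Rightarrow T_{gh}$ and $u\colon\mathrm{Id}_{\mathcal{C}}\Rightarrow T_e$, with $(\gamma_{gh,k})_X\circ(\gamma_{g,h})_{T_k(X)}=(\gamma_{g,hk})_X\circ T_g((\gamma_{h,k})_X)$, and with $u_{T_g(X)}$, $(\gamma_{e,g})_X$ mutually inverse and $T_g(u_X)$, $(\gamma_{g,e})_X$ mutually inverse. For a subcategory $\mathcal{D}$, $\overline{\mathcal{D}}$ denotes the smallest subcategory of $\mathcal{C}$ containing $\mathcal{D}$ and closed under isomorphisms. An ideal of $\mathcal{C}$ is a subcategory closed under isomorphisms such that $X\otimes Y$ and $Y\otimes X$ are objects of it whenever $X$ is an object of it and $Y$ is any object of $\mathcal{C}$. *)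

theory Defs
  imports "HOL-Algebra.Group"
begin

record ('o, 'm) cat =
  Obj  :: "'o set"
  Arr  :: "'m set"
  cdom :: "'m \<Rightarrow> 'o"
  ccod :: "'m \<Rightarrow> 'o"
  cmp  :: "'m \<Rightarrow> 'm \<Rightarrow> 'm"   (* cmp C g f = g \<circ> f *)
  idt  :: "'o \<Rightarrow> 'm"

definition homs :: "('o, 'm, 'z) cat_scheme \<Rightarrow> 'o \<Rightarrow> 'o \<Rightarrow> 'm set" where
  "homs C X Y = {f \<in> Arr C. cdom C f = X \<and> ccod C f = Y}"

definition is_category :: "('o, 'm, 'z) cat_scheme \<Rightarrow> bool" where
  "is_category C \<longleftrightarrow>
     (\<forall>f\<in>Arr C. cdom C f \<in> Obj C \<and> ccod C f \<in> Obj C) \<and>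
     (\<forall>X\<in>Obj C. idt C X \<in> homs C X X) \<and>
     (\<forall>f\<in>Arr C. \<forall>g\<in>Arr C. ccod C f = cdom C g \<longrightarrow>
        cmp C g f \<in> homs C (cdom C f) (ccod C g)) \<and>
     (\<forall>f\<in>Arr C. cmp C f (idt C (cdom C f)) = f \<and> cmp C (idt C (ccod C f)) f = f) \<and>
     (\<forall>f\<in>Arr C. \<forall>g\<in>Arr C. \<forall>h\<in>Arr C. ccod C f = cdom C g \<longrightarrow> ccod C g = cdom C h \<longrightarrow>
        cmp C h (cmp C g f) = cmp C (cmp C h g) f)"

definition inverse_pair :: "('o, 'm, 'z) cat_scheme \<Rightarrow> 'm \<Rightarrow> 'm \<Rightarrow> bool" where
  "inverse_pair C f g \<longleftrightarrow> f \<in> Arr C \<and> g \<in> Arr C \<and>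
     cdom C g = ccod C f \<and> ccod C g = cdom C f \<and>
     cmp C g f = idt C (cdom C f) \<and> cmp C f g = idt C (ccod C f)"

definition iso_arr :: "('o, 'm, 'z) cat_scheme \<Rightarrow> 'm \<Rightarrow> bool" where
  "iso_arr C f \<longleftrightarrow> (\<exists>g. inverse_pair C f g)"

definition isomorphic :: "('o, 'm, 'z) cat_scheme \<Rightarrow> 'o \<Rightarrow> 'o \<Rightarrow> bool" where
  "isomorphic C X Y \<longleftrightarrow> (\<exists>f. f \<in> homs C X Y \<and> iso_arr C f)"

definition endofunctor :: "('o, 'm, 'z) cat_scheme \<Rightarrow> ('o \<Rightarrow> 'o) \<Rightarrow> ('m \<Rightarrow> 'm) \<Rightarrow> bool" where
  "endofunctor C Fo Fm \<longleftrightarrow>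
     (\<forall>X\<in>Obj C. Fo X \<in> Obj C) \<and>
     (\<forall>f\<in>Arr C. Fm f \<in> homs C (Fo (cdom C f)) (Fo (ccod C f))) \<and>
     (\<forall>X\<in>Obj C. Fm (idt C X) = idt C (Fo X)) \<and>
     (\<forall>f\<in>Arr C. \<forall>g\<in>Arr C. ccod C f = cdom C g \<longrightarrow> Fm (cmp C g f) = cmp C (Fm g) (Fm f))"

definition nat_iso :: "('o, 'm, 'z) cat_scheme \<Rightarrow> ('o \<Rightarrow> 'o) \<Rightarrow> ('m \<Rightarrow> 'm)
     \<Rightarrow> ('o \<Rightarrow> 'o) \<Rightarrow> ('m \<Rightarrow> 'm) \<Rightarrow> ('o \<Rightarrow> 'm) \<Rightarrow> bool" where
  "nat_iso C Fo Fm Go Gm \<eta> \<longleftrightarrow>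
     (\<forall>X\<in>Obj C. \<eta> X \<in> homs C (Fo X) (Go X) \<and> iso_arr C (\<eta> X)) \<and>
     (\<forall>f\<in>Arr C. cmp C (\<eta> (ccod C f)) (Fm f) = cmp C (Gm f) (\<eta> (cdom C f)))"

definition is_equivalence :: "('o, 'm, 'z) cat_scheme \<Rightarrow> ('o \<Rightarrow> 'o) \<Rightarrow> ('m \<Rightarrow> 'm) \<Rightarrow> bool" where
  "is_equivalence C Fo Fm \<longleftrightarrow> endofunctor C Fo Fm \<and>
     (\<exists>Ho Hm. endofunctor C Ho Hm \<and>
        (\<exists>\<eta>. nat_iso C (Ho \<circ> Fo) (Hm \<circ> Fm) id id \<eta>) \<and>
        (\<exists>\<epsilon>. nat_iso C (Fo \<circ> Ho) (Fm \<circ> Hm) id id \<epsilon>))"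

record ('o, 'm) sgcat = "('o, 'm) cat" +
  tens  :: "'o \<Rightarrow> 'o \<Rightarrow> 'o"
  tensm :: "'m \<Rightarrow> 'm \<Rightarrow> 'm"
  asc   :: "'o \<Rightarrow> 'o \<Rightarrow> 'o \<Rightarrow> 'm"   (* (X\<otimes>Y)\<otimes>Z \<rightarrow> X\<otimes>(Y\<otimes>Z) *)

definition semigroupal_category :: "('o, 'm, 'z) sgcat_scheme \<Rightarrow> bool" where
  "semigroupal_category C \<longleftrightarrow> is_category C \<and>
     (\<forall>X\<in>Obj C. \<forall>Y\<in>Obj C. tens C X Y \<in> Obj C) \<and>
     (\<forall>f\<in>Arr C. \<forall>g\<in>Arr C. tensm C f g \<in>
        homs C (tens C (cdom C f) (cdom C g)) (tens C (ccod C f) (ccod C g))) \<and>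
     (\<forall>X\<in>Obj C. \<forall>Y\<in>Obj C. tensm C (idt C X) (idt C Y) = idt C (tens C X Y)) \<and>
     (\<forall>f\<in>Arr C. \<forall>g\<in>Arr C. \<forall>f'\<in>Arr C. \<forall>g'\<in>Arr C.
        ccod C f = cdom C g \<longrightarrow> ccod C f' = cdom C g' \<longrightarrow>
        tensm C (cmp C g f) (cmp C g' f') = cmp C (tensm C g g') (tensm C f f')) \<and>
     (\<forall>X\<in>Obj C. \<forall>Y\<in>Obj C. \<forall>Z\<in>Obj C.
        asc C X Y Z \<in> homs C (tens C (tens C X Y) Z) (tens C X (tens C Y Z)) \<and>
        iso_arr C (asc C X Y Z)) \<and>
     (\<forall>f\<in>Arr C. \<forall>g\<in>Arr C. \<forall>h\<in>Arr C.
        cmp C (asc C (ccod C f) (ccod C g) (ccod C h)) (tensm C (tensm C f g) h) =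
        cmp C (tensm C f (tensm C g h)) (asc C (cdom C f) (cdom C g) (cdom C h))) \<and>
     (\<forall>W\<in>Obj C. \<forall>X\<in>Obj C. \<forall>Y\<in>Obj C. \<forall>Z\<in>Obj C.
        cmp C (asc C W X (tens C Y Z)) (asc C (tens C W X) Y Z) =
        cmp C (tensm C (idt C W) (asc C X Y Z))
          (cmp C (asc C W (tens C X Y) Z) (tensm C (asc C W X Y) (idt C Z))))"

definition semigroupal_functor :: "('o, 'm, 'z) sgcat_scheme \<Rightarrow> ('o \<Rightarrow> 'o) \<Rightarrow> ('m \<Rightarrow> 'm)
     \<Rightarrow> ('o \<Rightarrow> 'o \<Rightarrow> 'm) \<Rightarrow> bool" where
  "semigroupal_functor C Fo Fm J \<longleftrightarrow> endofunctor C Fo Fm \<and>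
     (\<forall>X\<in>Obj C. \<forall>Y\<in>Obj C. J X Y \<in> homs C (tens C (Fo X) (Fo Y)) (Fo (tens C X Y)) \<and>
        iso_arr C (J X Y)) \<and>
     (\<forall>f\<in>Arr C. \<forall>g\<in>Arr C.
        cmp C (J (ccod C f) (ccod C g)) (tensm C (Fm f) (Fm g)) =
        cmp C (Fm (tensm C f g)) (J (cdom C f) (cdom C g))) \<and>
     (\<forall>X\<in>Obj C. \<forall>Y\<in>Obj C. \<forall>Z\<in>Obj C.
        cmp C (Fm (asc C X Y Z)) (cmp C (J (tens C X Y) Z) (tensm C (J X Y) (idt C (Fo Z)))) =
        cmp C (J X (tens C Y Z)) (cmp C (tensm C (idt C (Fo X)) (J Y Z)) (asc C (Fo X) (Fo Y) (Fo Z))))"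

definition semigroupal_nat_iso :: "('o, 'm, 'z) sgcat_scheme
     \<Rightarrow> ('o \<Rightarrow> 'o) \<Rightarrow> ('m \<Rightarrow> 'm) \<Rightarrow> ('o \<Rightarrow> 'o \<Rightarrow> 'm)
     \<Rightarrow> ('o \<Rightarrow> 'o) \<Rightarrow> ('m \<Rightarrow> 'm) \<Rightarrow> ('o \<Rightarrow> 'o \<Rightarrow> 'm) \<Rightarrow> ('o \<Rightarrow> 'm) \<Rightarrow> bool" where
  "semigroupal_nat_iso C Fo Fm J Go Gm K \<eta> \<longleftrightarrow> nat_iso C Fo Fm Go Gm \<eta> \<and>
     (\<forall>X\<in>Obj C. \<forall>Y\<in>Obj C.
        cmp C (\<eta> (tens C X Y)) (J X Y) = cmp C (K X Y) (tensm C (\<eta> X) (\<eta> Y)))"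

text \<open>Structure map of the composite semigroupal functor \<open>F \<circ> G\<close>.\<close>

definition comp_J :: "('o, 'm, 'z) sgcat_scheme \<Rightarrow> ('m \<Rightarrow> 'm) \<Rightarrow> ('o \<Rightarrow> 'o \<Rightarrow> 'm)
     \<Rightarrow> ('o \<Rightarrow> 'o) \<Rightarrow> ('o \<Rightarrow> 'o \<Rightarrow> 'm) \<Rightarrow> 'o \<Rightarrow> 'o \<Rightarrow> 'm" where
  "comp_J C Fm J Go K X Y = cmp C (Fm (K X Y)) (J (Go X) (Go Y))"

definition id_J :: "('o, 'm, 'z) sgcat_scheme \<Rightarrow> 'o \<Rightarrow> 'o \<Rightarrow> 'm" where
  "id_J C X Y = idt C (tens C X Y)"

definition group_action :: "('o, 'm, 'z) sgcat_scheme \<Rightarrow> ('g, 'b) monoid_scheme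
     \<Rightarrow> ('g \<Rightarrow> 'o \<Rightarrow> 'o) \<Rightarrow> ('g \<Rightarrow> 'm \<Rightarrow> 'm) \<Rightarrow> ('g \<Rightarrow> 'o \<Rightarrow> 'o \<Rightarrow> 'm)
     \<Rightarrow> ('g \<Rightarrow> 'g \<Rightarrow> 'o \<Rightarrow> 'm) \<Rightarrow> ('o \<Rightarrow> 'm) \<Rightarrow> bool" where
  "group_action C G To Tm TJ gam u \<longleftrightarrow>
     semigroupal_category C \<and> group G \<and>
     (\<forall>g\<in>carrier G. semigroupal_functor C (To g) (Tm g) (TJ g) \<and> is_equivalence C (To g) (Tm g)) \<and>
     (\<forall>g\<in>carrier G. \<forall>h\<in>carrier G.
        semigroupal_nat_iso C (To g \<circ> To h) (Tm g \<circ> Tm h) (comp_J C (Tm g) (TJ g) (To h) (TJ h))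
          (To (g \<otimes>\<^bsub>G\<^esub> h)) (Tm (g \<otimes>\<^bsub>G\<^esub> h)) (TJ (g \<otimes>\<^bsub>G\<^esub> h)) (gam g h)) \<and>
     semigroupal_nat_iso C id id (id_J C) (To \<one>\<^bsub>G\<^esub>) (Tm \<one>\<^bsub>G\<^esub>) (TJ \<one>\<^bsub>G\<^esub>) u \<and>
     (\<forall>g\<in>carrier G. \<forall>h\<in>carrier G. \<forall>k\<in>carrier G. \<forall>X\<in>Obj C.
        cmp C (gam (g \<otimes>\<^bsub>G\<^esub> h) k X) (gam g h (To k X)) =
        cmp C (gam g (h \<otimes>\<^bsub>G\<^esub> k) X) (Tm g (gam h k X))) \<and>
     (\<forall>g\<in>carrier G. \<forall>X\<in>Obj C.
        inverse_pair C (u (To g X)) (gam \<one>\<^bsub>G\<^esub> g X) \<and>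
        inverse_pair C (Tm g (u X)) (gam g \<one>\<^bsub>G\<^esub> X))"

section \<open>Ideals and isomorphism closures (full subcategories, given by object classes)\<close>

definition cat_ideal :: "('o, 'm, 'z) sgcat_scheme \<Rightarrow> 'o set \<Rightarrow> bool" where
  "cat_ideal C I \<longleftrightarrow> I \<subseteq> Obj C \<and>
     (\<forall>X\<in>I. \<forall>Y\<in>Obj C. isomorphic C X Y \<longrightarrow> Y \<in> I) \<and>
     (\<forall>X\<in>I. \<forall>Y\<in>Obj C. tens C X Y \<in> I \<and> tens C Y X \<in> I)"

definition iso_closure :: "('o, 'm, 'z) cat_scheme \<Rightarrow> 'o set \<Rightarrow> 'o set" where
  "iso_closure C D = {Y \<in> Obj C. \<exists>X\<in>D. isomorphic C X Y}"

definition piece :: "('o, 'm, 'z) sgcat_scheme \<Rightarrow> 'o set \<Rightarrow> ('o \<Rightarrow> 'o) \<Rightarrow> 'o set" where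
  "piece C I Tg = I \<inter> iso_closure C (Tg ` I)"

end

theory Submission
  imports Defs
begin

text \<open>
  By the coherence isomorphisms \<open>\<gamma>\<close> and \<open>u\<close>, \<open>T\<^sub>g\<close> and \<open>T\<^bsub>g\<^sup>-\<^sup>1\<^esub>\<close> are quasi-inverse to each other
  up to isomorphism of objects, and both preserve isomorphism. For any pair of such endofunctors
  \<open>F\<close>, \<open>H\<close> and any class \<open>\<I>\<close> of objects closed under isomorphism one has
  \<open>closure(F(\<I> \<inter> closure(H \<I>))) = \<I> \<inter> closure(F \<I>)\<close>: an object isomorphic to \<open>F X\<close> with
  \<open>X \<cong> H Z\<close>, \<open>Z \<in> \<I>\<close>, is isomorphic to \<open>F H Z \<cong> Z\<close>; conversely \<open>Y \<cong> F Z\<close> is recovered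
  as \<open>Y \<cong> F (H Y)\<close> with \<open>H Y \<cong> H F Z \<cong> Z\<close>.
\<close>

lemma is_categoryD:
  assumes "is_category C"
  shows is_category_dom_cod: "f \<in> Arr C \<Longrightarrow> cdom C f \<in> Obj C \<and> ccod C f \<in> Obj C"
    and is_category_idt: "X \<in> Obj C \<Longrightarrow> idt C X \<in> homs C X X"
    and is_category_cmp: "f \<in> Arr C \<Longrightarrow> g \<in> Arr C \<Longrightarrow> ccod C f = cdom C g \<Longrightarrow>
        cmp C g f \<in> homs C (cdom C f) (ccod C g)"
    and is_category_idt_right: "f \<in> Arr C \<Longrightarrow> cmp C f (idt C (cdom C f)) = f"
    and is_category_idt_left: "f \<in> Arr C \<Longrightarrow> cmp C (idt C (ccod C f)) f = f"
    and is_category_assoc: "f \<in> Arr C \<Longrightarrow> g \<in> Arr C \<Longrightarrow> h \<in> Arr C \<Longrightarrow>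
        ccod C f = cdom C g \<Longrightarrow> ccod C g = cdom C h \<Longrightarrow>
        cmp C h (cmp C g f) = cmp C (cmp C h g) f"
  using assms unfolding is_category_def by blast+

lemma inverse_pair_idt:
  assumes "is_category C" "X \<in> Obj C"
  shows "inverse_pair C (idt C X) (idt C X)"
proof -
  have idt: "idt C X \<in> homs C X X"
    using assms by (rule is_category_idt)
  then have "cmp C (idt C X) (idt C X) = idt C X"
    using is_category_idt_right[OF assms(1), of "idt C X"] by (simp add: homs_def)
  with idt show ?thesis
    unfolding inverse_pair_def homs_def by auto
qed

lemma inverse_pair_cmp:
  assumes C: "is_category C"
    and f: "inverse_pair C f f'" and g: "inverse_pair C g g'" and fg: "ccod C f = cdom C g"
  shows "inverse_pair C (cmp C g f) (cmp C f' g')"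
proof -
  from f g fg have arr: "f \<in> Arr C" "f' \<in> Arr C" "g \<in> Arr C" "g' \<in> Arr C"
    and ends: "cdom C f' = ccod C f" "ccod C f' = cdom C f"
      "cdom C g' = ccod C g" "ccod C g' = ccod C f"
    and inv: "cmp C f' f = idt C (cdom C f)" "cmp C f f' = idt C (ccod C f)"
      "cmp C g' g = idt C (ccod C f)" "cmp C g g' = idt C (ccod C g)"
    unfolding inverse_pair_def by auto
  have gf: "cmp C g f \<in> homs C (cdom C f) (ccod C g)"
    using is_category_cmp[OF C, of f g] arr fg by simp
  have fg': "cmp C f' g' \<in> homs C (ccod C g) (cdom C f)"
    using is_category_cmp[OF C, of g' f'] arr ends by simp
  have "cmp C (cmp C f' g') (cmp C g f) = cmp C f' (cmp C g' (cmp C g f))"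
    using is_category_assoc[OF C, of "cmp C g f" g' f'] gf arr ends by (simp add: homs_def)
  also have "cmp C g' (cmp C g f) = f"
    using is_category_assoc[OF C, of f g g'] is_category_idt_left[OF C, of f] arr ends fg inv
    by simp
  finally have left: "cmp C (cmp C f' g') (cmp C g f) = idt C (cdom C f)"
    using inv by simp
  have "cmp C (cmp C g f) (cmp C f' g') = cmp C g (cmp C f (cmp C f' g'))"
    using is_category_assoc[OF C, of "cmp C f' g'" f g] fg' arr ends fg by (simp add: homs_def)
  also have "cmp C f (cmp C f' g') = g'"
    using is_category_assoc[OF C, of g' f' f] is_category_idt_left[OF C, of g'] arr ends inv
    by simp
  finally have right: "cmp C (cmp C g f) (cmp C f' g') = idt C (ccod C g)"
    using inv by simp
  show ?thesis
    using gf fg' left right unfolding inverse_pair_def homs_def by auto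
qed

lemma isomorphic_refl: "is_category C \<Longrightarrow> X \<in> Obj C \<Longrightarrow> isomorphic C X X"
  unfolding isomorphic_def iso_arr_def
  by (blast intro: inverse_pair_idt is_category_idt)

lemma isomorphic_sym:
  assumes "isomorphic C X Y"
  shows "isomorphic C Y X"
proof -
  obtain f g where "f \<in> homs C X Y" "inverse_pair C f g"
    using assms unfolding isomorphic_def iso_arr_def by blast
  then have "g \<in> homs C Y X" "inverse_pair C g f"
    by (auto simp: homs_def inverse_pair_def)
  then show ?thesis
    unfolding isomorphic_def iso_arr_def by blast
qed

lemma isomorphic_trans:
  assumes C: "is_category C" and "isomorphic C X Y" "isomorphic C Y Z"
  shows "isomorphic C X Z"
proof -
  obtain f f' g g' where f: "f \<in> homs C X Y" "inverse_pair C f f'"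
    and g: "g \<in> homs C Y Z" "inverse_pair C g g'"
    using assms unfolding isomorphic_def iso_arr_def by blast
  then have "inverse_pair C (cmp C g f) (cmp C f' g')"
    by (intro inverse_pair_cmp[OF C]) (auto simp: homs_def)
  moreover have "cmp C g f \<in> homs C X Z"
    using f g is_category_cmp[OF C] by (auto simp: homs_def)
  ultimately show ?thesis
    unfolding isomorphic_def iso_arr_def by blast
qed

lemma isomorphic_Obj:
  assumes C: "is_category C" and "isomorphic C X Y"
  shows "X \<in> Obj C" "Y \<in> Obj C"
proof -
  obtain f where "f \<in> Arr C" "cdom C f = X" "ccod C f = Y"
    using assms(2) unfolding isomorphic_def homs_def by blast
  then show "X \<in> Obj C" "Y \<in> Obj C"
    using is_category_dom_cod[OF C] by blast+
qed

lemma endofunctorD: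
  assumes "endofunctor C Fo Fm"
  shows endofunctor_Obj: "X \<in> Obj C \<Longrightarrow> Fo X \<in> Obj C"
    and endofunctor_homs: "f \<in> Arr C \<Longrightarrow> Fm f \<in> homs C (Fo (cdom C f)) (Fo (ccod C f))"
    and endofunctor_idt: "X \<in> Obj C \<Longrightarrow> Fm (idt C X) = idt C (Fo X)"
    and endofunctor_cmp: "f \<in> Arr C \<Longrightarrow> g \<in> Arr C \<Longrightarrow> ccod C f = cdom C g \<Longrightarrow>
        Fm (cmp C g f) = cmp C (Fm g) (Fm f)"
  using assms unfolding endofunctor_def by blast+

lemma endofunctor_inverse_pair:
  assumes C: "is_category C" and F: "endofunctor C Fo Fm" and f: "inverse_pair C f f'"
  shows "inverse_pair C (Fm f) (Fm f')"
proof -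
  from f have arr: "f \<in> Arr C" "f' \<in> Arr C" "cdom C f' = ccod C f" "ccod C f' = cdom C f"
    and inv: "cmp C f' f = idt C (cdom C f)" "cmp C f f' = idt C (ccod C f)"
    unfolding inverse_pair_def by auto
  have obj: "cdom C f \<in> Obj C" "ccod C f \<in> Obj C"
    using is_category_dom_cod[OF C arr(1)] by auto
  have "cmp C (Fm f') (Fm f) = idt C (Fo (cdom C f))"
    using endofunctor_cmp[OF F, of f f'] endofunctor_idt[OF F] arr inv obj by simp
  moreover have "cmp C (Fm f) (Fm f') = idt C (Fo (ccod C f))"
    using endofunctor_cmp[OF F, of f' f] endofunctor_idt[OF F] arr inv obj by simp
  moreover have "Fm f \<in> homs C (Fo (cdom C f)) (Fo (ccod C f))"
    "Fm f' \<in> homs C (Fo (ccod C f)) (Fo (cdom C f))"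
    using endofunctor_homs[OF F, of f] endofunctor_homs[OF F, of f'] arr by simp_all
  ultimately show ?thesis
    unfolding inverse_pair_def homs_def by auto
qed

lemma endofunctor_isomorphic:
  assumes C: "is_category C" and F: "endofunctor C Fo Fm" and "isomorphic C X Y"
  shows "isomorphic C (Fo X) (Fo Y)"
proof -
  obtain f f' where f: "f \<in> homs C X Y" "inverse_pair C f f'"
    using assms(3) unfolding isomorphic_def iso_arr_def by blast
  then have "Fm f \<in> homs C (Fo X) (Fo Y)"
    using endofunctor_homs[OF F, of f] by (simp add: homs_def)
  with endofunctor_inverse_pair[OF C F f(2)] show ?thesis
    unfolding isomorphic_def iso_arr_def by blast
qed

lemma nat_iso_isomorphic: "nat_iso C Fo Fm Go Gm \<eta> \<Longrightarrow> X \<in> Obj C \<Longrightarrow> isomorphic C (Fo X) (Go X)"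
  unfolding nat_iso_def isomorphic_def by blast

lemma piece_quasi_inverse:
  assumes C: "is_category C"
    and F: "endofunctor C Fo Fm" and H: "endofunctor C Ho Hm"
    and FH: "\<And>X. X \<in> Obj C \<Longrightarrow> isomorphic C X (Fo (Ho X))"
    and HF: "\<And>X. X \<in> Obj C \<Longrightarrow> isomorphic C X (Ho (Fo X))"
    and I: "I \<subseteq> Obj C" and I_iso: "\<And>X Y. X \<in> I \<Longrightarrow> isomorphic C X Y \<Longrightarrow> Y \<in> I"
  shows "iso_closure C (Fo ` piece C I Ho) = piece C I Fo"
proof
  show "iso_closure C (Fo ` piece C I Ho) \<subseteq> piece C I Fo"
  proof
    fix Y assume "Y \<in> iso_closure C (Fo ` piece C I Ho)"
    then obtain X Z where X: "X \<in> I" "isomorphic C (Fo X) Y"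
      and Z: "Z \<in> I" "isomorphic C (Ho Z) X"
      unfolding iso_closure_def piece_def by blast
    from Z I have "isomorphic C Z (Fo X)"
      using isomorphic_trans[OF C FH endofunctor_isomorphic[OF C F Z(2)]] by blast
    then have "Y \<in> I"
      using I_iso[OF Z(1)] isomorphic_trans[OF C _ X(2)] by blast
    with X isomorphic_Obj(2)[OF C X(2)] show "Y \<in> piece C I Fo"
      unfolding piece_def iso_closure_def by blast
  qed
next
  show "piece C I Fo \<subseteq> iso_closure C (Fo ` piece C I Ho)"
  proof
    fix Y assume "Y \<in> piece C I Fo"
    then obtain Z where Y: "Y \<in> I" and Z: "Z \<in> I" "isomorphic C (Fo Z) Y"
      unfolding iso_closure_def piece_def by blast
    have Y_Obj: "Y \<in> Obj C" and HY_Obj: "Ho Y \<in> Obj C"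
      using Y I endofunctor_Obj[OF H] by blast+
    from Z I have "isomorphic C Z (Ho Y)"
      using isomorphic_trans[OF C HF endofunctor_isomorphic[OF C H Z(2)]] by blast
    then have "Ho Y \<in> piece C I Ho"
      using I_iso[OF Z(1)] Y HY_Obj isomorphic_refl[OF C HY_Obj]
      unfolding piece_def iso_closure_def by blast
    moreover have "isomorphic C (Fo (Ho Y)) Y"
      using isomorphic_sym[OF FH[OF Y_Obj]] .
    ultimately show "Y \<in> iso_closure C (Fo ` piece C I Ho)"
      using Y_Obj unfolding iso_closure_def by blast
  qed
qed

lemma group_action_is_category: "group_action C G To Tm TJ gam u \<Longrightarrow> is_category C"
  by (simp add: group_action_def semigroupal_category_def)

lemma group_action_endofunctor:
  "group_action C G To Tm TJ gam u \<Longrightarrow> g \<in> carrier G \<Longrightarrow> endofunctor C (To g) (Tm g)"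
  by (simp add: group_action_def semigroupal_functor_def)

lemma group_action_nat_iso_gam:
  assumes "group_action C G To Tm TJ gam u" "g \<in> carrier G" "h \<in> carrier G"
  shows "nat_iso C (To g \<circ> To h) (Tm g \<circ> Tm h) (To (g \<otimes>\<^bsub>G\<^esub> h)) (Tm (g \<otimes>\<^bsub>G\<^esub> h)) (gam g h)"
  using assms unfolding group_action_def semigroupal_nat_iso_def by metis

lemma group_action_nat_iso_unit:
  "group_action C G To Tm TJ gam u \<Longrightarrow> nat_iso C id id (To \<one>\<^bsub>G\<^esub>) (Tm \<one>\<^bsub>G\<^esub>) u"
  unfolding group_action_def semigroupal_nat_iso_def by (elim conjE)

lemma group_action_isomorphic_inverse:
  assumes A: "group_action C G To Tm TJ gam u"
    and h: "h \<in> carrier G" and k: "k \<in> carrier G" and hk: "h \<otimes>\<^bsub>G\<^esub> k = \<one>\<^bsub>G\<^esub>"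
    and X: "X \<in> Obj C"
  shows "isomorphic C X (To h (To k X))"
proof -
  have "isomorphic C X (To \<one>\<^bsub>G\<^esub> X)"
    using nat_iso_isomorphic[OF group_action_nat_iso_unit[OF A] X] by simp
  moreover have "isomorphic C (To h (To k X)) (To \<one>\<^bsub>G\<^esub> X)"
    using nat_iso_isomorphic[OF group_action_nat_iso_gam[OF A h k] X] hk by simp
  ultimately show ?thesis
    by (rule isomorphic_trans[OF group_action_is_category[OF A] _ isomorphic_sym])
qed

theorem corollary3p2:
  fixes C :: "('o, 'm) sgcat" and G :: "('g, 'b) monoid_scheme"
  assumes "group_action C G To Tm TJ gam u"
    and "cat_ideal C I"
    and "g \<in> carrier G"
  shows "iso_closure C (To g ` piece C I (To (inv\<^bsub>G\<^esub> g))) = piece C I (To g)"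
proof -
  note A = assms(1) and g = assms(3)
  have C: "is_category C"
    using group_action_is_category[OF A] .
  have "group G"
    using A by (simp add: group_action_def)
  then have g': "inv\<^bsub>G\<^esub> g \<in> carrier G" "g \<otimes>\<^bsub>G\<^esub> inv\<^bsub>G\<^esub> g = \<one>\<^bsub>G\<^esub>"
      "inv\<^bsub>G\<^esub> g \<otimes>\<^bsub>G\<^esub> g = \<one>\<^bsub>G\<^esub>"
    using g by (simp_all add: group.r_inv group.l_inv)
  have I: "I \<subseteq> Obj C" and I_iso: "\<And>X Y. X \<in> I \<Longrightarrow> isomorphic C X Y \<Longrightarrow> Y \<in> I"
    using assms(2) isomorphic_Obj(2)[OF C] unfolding cat_ideal_def by auto
  show ?thesis
    by (rule piece_quasi_inverse[OF C
          group_action_endofunctor[OF A g] group_action_endofunctor[OF A g'(1)]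
          group_action_isomorphic_inverse[OF A g g'(1,2)]
          group_action_isomorphic_inverse[OF A g'(1) g g'(3)] I I_iso])
qed

end
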